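(* Under the hypotheses of Lemma 2.2, the additive map $\varphi:\mathcal{U}\to\mathcal{U}$, $\varphi(U)=\phi(U)-\phi(I)U+[T,U]$ with $T=P_1\phi(P_1)P_2+P_2\phi(P_2)P_1$, is a Jordan derivation, i.e. $\varphi(U^2)=\varphi(U)U+U\varphi(U)$ for all $U\in\mathcal{U}$.
   Context: $\mathcal{U}=\begin{pmatrix}\mathcal{A}&\mathcal{M}\\ \mathcal{N}&\mathcal{B}\end{pmatrix}$ is a generalized matrix ring: $\mathcal{A},\mathcal{B}$ unital 2-torsion free rings, $\mathcal{M}$ a unital $(\mathcal{A},\mathcal{B})$-bimodule faithful on both sides, $\mathcal{N}$ a unital $(\mathcal{B},\mathcal{A})$-bimodule, with bimodule pairings $MN\in\mathcal{A}$, $NM\in\mathcal{B}$ satisfying $(MN)M'=M(NM')$, $(NM)N'=N(MN')$; $\mathcal{U}$ consists of $2\times2$ matrices with usual matrix operations and identity $I$. The hypotheses of Lemma 2.2: $\phi:\mathcal{U}\to\mathcal{U}$ is additive and $\phi(U)\circ V+U\circ\phi(V)=0$ whenever $UV=VU=0$. $X\circ Y=XY+YX$, $[X,Y]=XY-YX$. $P_1=\mathrm{diag}(I_{\mathcal{A}},0)$, $P_2=\mathrm{diag}(0,I_{\mathcal{B}})$. *)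

theory Defs
  imports Main "HOL-Library.Product_Plus"
begin

text \<open>A generalized matrix ring U = [[A, M],[N, B]] is represented by its data:
  the rings A, B are the types 'a, 'b; the bimodules M, N are the abelian groups 'm, 'n;
  the module actions and the two pairings M x N -> A, N x M -> B are record fields.
  Elements of U are quadruples (a, m, n, b) standing for the matrix [[a, m],[n, b]];
  addition is componentwise (Product_Plus).\<close>

record ('a, 'm, 'n, 'b) gmr =
  lA  :: "'a \<Rightarrow> 'm \<Rightarrow> 'm"
  rB  :: "'m \<Rightarrow> 'b \<Rightarrow> 'm"
  lB  :: "'b \<Rightarrow> 'n \<Rightarrow> 'n"
  rA  :: "'n \<Rightarrow> 'a \<Rightarrow> 'n"
  pMN :: "'m \<Rightarrow> 'n \<Rightarrow> 'a"
  pNM :: "'n \<Rightarrow> 'm \<Rightarrow> 'b"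

type_synonym ('a, 'm, 'n, 'b) gmat = "'a \<times> 'm \<times> 'n \<times> 'b"

definition two_torsion_free :: "'a::ab_group_add itself \<Rightarrow> bool" where
  "two_torsion_free _ \<longleftrightarrow> (\<forall>x::'a. x + x = 0 \<longrightarrow> x = 0)"

definition gen_matrix_ring ::
  "('a::ring_1, 'm::ab_group_add, 'n::ab_group_add, 'b::ring_1) gmr \<Rightarrow> bool" where
  "gen_matrix_ring S \<longleftrightarrow>
    \<comment> \<open>M is a unital (A,B)-bimodule\<close>
    (\<forall>a a' m. lA S (a + a') m = lA S a m + lA S a' m) \<and>
    (\<forall>a m m'. lA S a (m + m') = lA S a m + lA S a m') \<and>
    (\<forall>a a' m. lA S (a * a') m = lA S a (lA S a' m)) \<and>
    (\<forall>m. lA S 1 m = m) \<and>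
    (\<forall>m b b'. rB S m (b + b') = rB S m b + rB S m b') \<and>
    (\<forall>m m' b. rB S (m + m') b = rB S m b + rB S m' b) \<and>
    (\<forall>m b b'. rB S m (b * b') = rB S (rB S m b) b') \<and>
    (\<forall>m. rB S m 1 = m) \<and>
    (\<forall>a m b. rB S (lA S a m) b = lA S a (rB S m b)) \<and>
    \<comment> \<open>N is a unital (B,A)-bimodule\<close>
    (\<forall>b b' n. lB S (b + b') n = lB S b n + lB S b' n) \<and>
    (\<forall>b n n'. lB S b (n + n') = lB S b n + lB S b n') \<and>
    (\<forall>b b' n. lB S (b * b') n = lB S b (lB S b' n)) \<and>
    (\<forall>n. lB S 1 n = n) \<and>
    (\<forall>n a a'. rA S n (a + a') = rA S n a + rA S n a') \<and>
    (\<forall>n n' a. rA S (n + n') a = rA S n a + rA S n' a) \<and>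
    (\<forall>n a a'. rA S n (a * a') = rA S (rA S n a) a') \<and>
    (\<forall>n. rA S n 1 = n) \<and>
    (\<forall>b n a. rA S (lB S b n) a = lB S b (rA S n a)) \<and>
    \<comment> \<open>M is faithful on both sides\<close>
    (\<forall>a. (\<forall>m. lA S a m = 0) \<longrightarrow> a = 0) \<and>
    (\<forall>b. (\<forall>m. rB S m b = 0) \<longrightarrow> b = 0) \<and>
    \<comment> \<open>pairing M x N -> A: A-bimodule homomorphism, B-balanced\<close>
    (\<forall>m m' n. pMN S (m + m') n = pMN S m n + pMN S m' n) \<and>
    (\<forall>m n n'. pMN S m (n + n') = pMN S m n + pMN S m n') \<and>
    (\<forall>a m n. pMN S (lA S a m) n = a * pMN S m n) \<and>
    (\<forall>m n a. pMN S m (rA S n a) = pMN S m n * a) \<and>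
    (\<forall>m b n. pMN S (rB S m b) n = pMN S m (lB S b n)) \<and>
    \<comment> \<open>pairing N x M -> B: B-bimodule homomorphism, A-balanced\<close>
    (\<forall>n n' m. pNM S (n + n') m = pNM S n m + pNM S n' m) \<and>
    (\<forall>n m m'. pNM S n (m + m') = pNM S n m + pNM S n m') \<and>
    (\<forall>b n m. pNM S (lB S b n) m = b * pNM S n m) \<and>
    (\<forall>n m b. pNM S n (rB S m b) = pNM S n m * b) \<and>
    (\<forall>n a m. pNM S (rA S n a) m = pNM S n (lA S a m)) \<and>
    \<comment> \<open>associativity conditions\<close>
    (\<forall>m n m'. lA S (pMN S m n) m' = rB S m (pNM S n m')) \<and>
    (\<forall>n m n'. lB S (pNM S n m) n' = rA S n (pMN S m n'))"

definition gm_mult ::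
  "('a::ring_1, 'm::ab_group_add, 'n::ab_group_add, 'b::ring_1) gmr \<Rightarrow>
   ('a, 'm, 'n, 'b) gmat \<Rightarrow> ('a, 'm, 'n, 'b) gmat \<Rightarrow> ('a, 'm, 'n, 'b) gmat" where
  "gm_mult S X Y = (case X of (a, m, n, b) \<Rightarrow> case Y of (a', m', n', b') \<Rightarrow>
     (a * a' + pMN S m n',
      lA S a m' + rB S m b',
      lB S b n' + rA S n a',
      pNM S n m' + b * b'))"

definition gm_one :: "('a::ring_1, 'm::ab_group_add, 'n::ab_group_add, 'b::ring_1) gmat" where
  "gm_one = (1, 0, 0, 1)"

definition gm_P1 :: "('a::ring_1, 'm::ab_group_add, 'n::ab_group_add, 'b::ring_1) gmat" where
  "gm_P1 = (1, 0, 0, 0)"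

definition gm_P2 :: "('a::ring_1, 'm::ab_group_add, 'n::ab_group_add, 'b::ring_1) gmat" where
  "gm_P2 = (0, 0, 0, 1)"

definition gm_jordan where "gm_jordan S X Y = gm_mult S X Y + gm_mult S Y X"
definition gm_comm where "gm_comm S X Y = gm_mult S X Y - gm_mult S Y X"

definition gm_T where
  "gm_T S \<phi> = gm_mult S (gm_mult S gm_P1 (\<phi> gm_P1)) gm_P2
             + gm_mult S (gm_mult S gm_P2 (\<phi> gm_P2)) gm_P1"

definition gm_varphi where
  "gm_varphi S \<phi> U = \<phi> U - gm_mult S (\<phi> gm_one) U + gm_comm S (gm_T S \<phi>) U"

end

theory Submission
  imports Defs "HOL.Modules"
begin

text \<open>Since \<open>P\<^sub>1 P\<^sub>2 = P\<^sub>2 P\<^sub>1 = 0\<close>, the hypothesis forces \<open>C = \<phi>(I)\<close> to be diagonal and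
  determines \<open>\<phi>(P\<^sub>1)\<close>, \<open>\<phi>(P\<^sub>2)\<close> up to off-diagonal entries, which the inner term \<open>[T, -]\<close>
  removes: \<open>\<delta> = \<phi> - C(-) + [T, -]\<close> is additive, kills \<open>P\<^sub>1\<close> and \<open>P\<^sub>2\<close>, and \<open>\<delta> + C(-)\<close> still
  satisfies the zero-product condition. Testing this condition on pairs of complementary
  idempotents such as \<open>(1, m, 0, 0)\<close>, \<open>(0, -m, 0, 1)\<close> shows that \<open>C\<close> is central, so \<open>\<delta>\<close> itself
  satisfies the condition, and that \<open>\<delta>\<close> preserves \<open>A\<close> and \<open>B\<close>, maps \<open>M\<close> and \<open>N\<close> into
  \<open>M + N\<close>, and obeys Leibniz rules against the module actions. Faithfulness of \<open>M\<close> turns these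
  into derivation laws on \<open>A\<close>, \<open>B\<close> and the pairings, and the Jordan identity follows by
  expanding \<open>U\<^sup>2\<close> componentwise.\<close>

definition jordan_derivable_at_zero ::
  "('a::ring_1, 'm::ab_group_add, 'n::ab_group_add, 'b::ring_1) gmr \<Rightarrow>
   (('a, 'm, 'n, 'b) gmat \<Rightarrow> ('a, 'm, 'n, 'b) gmat) \<Rightarrow> bool" where
  "jordan_derivable_at_zero S d \<longleftrightarrow>
     (\<forall>U V. gm_mult S U V = 0 \<longrightarrow> gm_mult S V U = 0 \<longrightarrow>
        gm_jordan S (d U) V + gm_jordan S U (d V) = 0)"

lemma jordan_derivable_at_zeroD:
  "jordan_derivable_at_zero S d \<Longrightarrow> gm_mult S U V = 0 \<Longrightarrow> gm_mult S V U = 0 \<Longrightarrow>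
     gm_jordan S (d U) V + gm_jordan S U (d V) = 0"
  unfolding jordan_derivable_at_zero_def by blast

lemma two_torsion_free_double_eq_0:
  "two_torsion_free TYPE('a::ab_group_add) \<Longrightarrow> (x::'a) + x = 0 \<longleftrightarrow> x = 0"
  unfolding two_torsion_free_def by (metis add_0)

lemma two_torsion_free_cancel:
  fixes x y :: "'a::ab_group_add"
  assumes "two_torsion_free TYPE('a)" and "x + x = y + y" and "- x = x + (y + y)"
  shows "x = 0" and "y = 0"
proof -
  have "(x + x) + (x + x) = x + (x + (y + y))"
    using assms(2) by (simp add: add.assoc)
  also have "\<dots> = 0"
    by (simp flip: assms(3))
  finally have "x = 0"
    using two_torsion_free_double_eq_0[OF assms(1)] by simp
  then show "x = 0" and "y = 0"
    using assms(2) two_torsion_free_double_eq_0[OF assms(1), of y] by simp_all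
qed

locale generalized_matrix_ring =
  fixes S :: "('a::ring_1, 'm::ab_group_add, 'n::ab_group_add, 'b::ring_1) gmr"
  assumes lA_add_left: "\<And>a a' m. lA S (a + a') m = lA S a m + lA S a' m"
    and lA_add_right: "\<And>a m m'. lA S a (m + m') = lA S a m + lA S a m'"
    and lA_mult[simp]: "\<And>a a' m. lA S (a * a') m = lA S a (lA S a' m)"
    and lA_one[simp]: "\<And>m. lA S 1 m = m"
    and rB_add_right: "\<And>m b b'. rB S m (b + b') = rB S m b + rB S m b'"
    and rB_add_left: "\<And>m m' b. rB S (m + m') b = rB S m b + rB S m' b"
    and rB_mult[simp]: "\<And>m b b'. rB S m (b * b') = rB S (rB S m b) b'"
    and rB_one[simp]: "\<And>m. rB S m 1 = m"
    and rB_lA[simp]: "\<And>a m b. rB S (lA S a m) b = lA S a (rB S m b)"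
    and lB_add_left: "\<And>b b' n. lB S (b + b') n = lB S b n + lB S b' n"
    and lB_add_right: "\<And>b n n'. lB S b (n + n') = lB S b n + lB S b n'"
    and lB_mult[simp]: "\<And>b b' n. lB S (b * b') n = lB S b (lB S b' n)"
    and lB_one[simp]: "\<And>n. lB S 1 n = n"
    and rA_add_right: "\<And>n a a'. rA S n (a + a') = rA S n a + rA S n a'"
    and rA_add_left: "\<And>n n' a. rA S (n + n') a = rA S n a + rA S n' a"
    and rA_mult[simp]: "\<And>n a a'. rA S n (a * a') = rA S (rA S n a) a'"
    and rA_one[simp]: "\<And>n. rA S n 1 = n"
    and rA_lB[simp]: "\<And>b n a. rA S (lB S b n) a = lB S b (rA S n a)"
    and faithful_A: "\<And>a. (\<And>m. lA S a m = 0) \<Longrightarrow> a = 0"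
    and faithful_B: "\<And>b. (\<And>m. rB S m b = 0) \<Longrightarrow> b = 0"
    and pMN_add_left: "\<And>m m' n. pMN S (m + m') n = pMN S m n + pMN S m' n"
    and pMN_add_right: "\<And>m n n'. pMN S m (n + n') = pMN S m n + pMN S m n'"
    and pMN_lA[simp]: "\<And>a m n. pMN S (lA S a m) n = a * pMN S m n"
    and pMN_rA[simp]: "\<And>m n a. pMN S m (rA S n a) = pMN S m n * a"
    and pMN_rB[simp]: "\<And>m b n. pMN S (rB S m b) n = pMN S m (lB S b n)"
    and pNM_add_left: "\<And>n n' m. pNM S (n + n') m = pNM S n m + pNM S n' m"
    and pNM_add_right: "\<And>n m m'. pNM S n (m + m') = pNM S n m + pNM S n m'"
    and pNM_lB[simp]: "\<And>b n m. pNM S (lB S b n) m = b * pNM S n m"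
    and pNM_rB[simp]: "\<And>n m b. pNM S n (rB S m b) = pNM S n m * b"
    and pNM_rA[simp]: "\<And>n a m. pNM S (rA S n a) m = pNM S n (lA S a m)"
    and lA_pMN[simp]: "\<And>m n m'. lA S (pMN S m n) m' = rB S m (pNM S n m')"
    and lB_pNM[simp]: "\<And>n m n'. lB S (pNM S n m) n' = rA S n (pMN S m n')"

lemma gen_matrix_ring_iff: "gen_matrix_ring S \<longleftrightarrow> generalized_matrix_ring S"
  by (simp only: gen_matrix_ring_def generalized_matrix_ring_def conj_assoc)

context generalized_matrix_ring
begin

lemma additive_actions:
  "additive (\<lambda>a. lA S a m)" "additive (lA S a)" "additive (\<lambda>m. rB S m b)" "additive (rB S m)"
  "additive (\<lambda>b. lB S b n)" "additive (lB S b)" "additive (\<lambda>n. rA S n a)" "additive (rA S n)"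
  "additive (\<lambda>m. pMN S m n)" "additive (pMN S m)" "additive (\<lambda>n. pNM S n m)" "additive (pNM S n)"
  by (simp_all add: additive_def lA_add_left lA_add_right rB_add_left rB_add_right lB_add_left
      lB_add_right rA_add_left rA_add_right pMN_add_left pMN_add_right pNM_add_left pNM_add_right)

lemmas actions_additive_simps[simp] =
  additive_actions[THEN additive.add] additive_actions[THEN additive.zero]
  additive_actions[THEN additive.minus] additive_actions[THEN additive.diff]

abbreviation gmult (infixl "\<odot>" 70) where "X \<odot> Y \<equiv> gm_mult S X Y"

lemma gm_mult_simps[simp]:
  "(a, m, n, b) \<odot> (a', m', n', b') =
     (a * a' + pMN S m n', lA S a m' + rB S m b', lB S b n' + rA S n a', pNM S n m' + b * b')"
  by (simp add: gm_mult_def)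

lemma gm_mult_assoc: "X \<odot> Y \<odot> Z = X \<odot> (Y \<odot> Z)"
  by (cases X; cases Y; cases Z) (simp add: algebra_simps)

lemma additive_gm_mult: "additive (\<lambda>X. X \<odot> Z)" "additive (\<lambda>X. Z \<odot> X)"
  by (simp_all add: additive_def gm_mult_def algebra_simps split: prod.splits)

lemmas gm_mult_zero[simp] = additive_gm_mult[THEN additive.zero]
lemmas gm_mult_add = additive_gm_mult[THEN additive.add]
lemmas gm_mult_diff = additive_gm_mult[THEN additive.diff]

lemma jordan_derivable_at_zero_add:
  assumes "jordan_derivable_at_zero S f" and "jordan_derivable_at_zero S g"
  shows "jordan_derivable_at_zero S (\<lambda>U. f U + g U)"
  unfolding jordan_derivable_at_zero_def
proof (intro allI impI)
  fix U V assume "U \<odot> V = 0" "V \<odot> U = 0"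
  with assms have "gm_jordan S (f U) V + gm_jordan S U (f V) = 0"
    and "gm_jordan S (g U) V + gm_jordan S U (g V) = 0"
    unfolding jordan_derivable_at_zero_def by blast+
  moreover have "gm_jordan S (f U + g U) V + gm_jordan S U (f V + g V) =
      (gm_jordan S (f U) V + gm_jordan S U (f V)) + (gm_jordan S (g U) V + gm_jordan S U (g V))"
    unfolding gm_jordan_def by (simp add: gm_mult_add algebra_simps)
  ultimately show "gm_jordan S (f U + g U) V + gm_jordan S U (f V + g V) = 0" by simp
qed

lemma jordan_derivable_at_zero_diff:
  assumes "jordan_derivable_at_zero S f" and "jordan_derivable_at_zero S g"
  shows "jordan_derivable_at_zero S (\<lambda>U. f U - g U)"
  unfolding jordan_derivable_at_zero_def
proof (intro allI impI)
  fix U V assume "U \<odot> V = 0" "V \<odot> U = 0"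
  with assms have "gm_jordan S (f U) V + gm_jordan S U (f V) = 0"
    and "gm_jordan S (g U) V + gm_jordan S U (g V) = 0"
    unfolding jordan_derivable_at_zero_def by blast+
  moreover have "gm_jordan S (f U - g U) V + gm_jordan S U (f V - g V) =
      (gm_jordan S (f U) V + gm_jordan S U (f V)) - (gm_jordan S (g U) V + gm_jordan S U (g V))"
    unfolding gm_jordan_def by (simp add: gm_mult_diff algebra_simps)
  ultimately show "gm_jordan S (f U - g U) V + gm_jordan S U (f V - g V) = 0" by simp
qed

lemma jordan_derivable_at_zero_commutator: "jordan_derivable_at_zero S (gm_comm S T)"
  unfolding jordan_derivable_at_zero_def
proof (intro allI impI)
  fix U V assume UV: "U \<odot> V = 0" and VU: "V \<odot> U = 0"
  have "V \<odot> (U \<odot> T) = 0" "U \<odot> (V \<odot> T) = 0"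
    by (simp_all only: gm_mult_assoc[symmetric] UV VU gm_mult_zero)
  then show "gm_jordan S (gm_comm S T U) V + gm_jordan S U (gm_comm S T V) = 0"
    unfolding gm_jordan_def gm_comm_def by (simp add: gm_mult_diff gm_mult_assoc UV VU)
qed

lemma jordan_derivable_at_zero_central:
  assumes "\<And>U. C \<odot> U = U \<odot> C"
  shows "jordan_derivable_at_zero S (\<lambda>U. C \<odot> U)"
  unfolding jordan_derivable_at_zero_def gm_jordan_def
  by (metis assms add_0 gm_mult_assoc gm_mult_zero(2))

lemma values_at_idempotents:
  assumes "two_torsion_free TYPE('a)" and "two_torsion_free TYPE('b)"
    and "additive \<phi>" and "jordan_derivable_at_zero S \<phi>"
  obtains c1 c2 x2 x3
  where "\<phi> gm_one = (c1, 0, 0, c2)" and "\<phi> gm_P1 = (c1, x2, x3, 0)" and "\<phi> gm_P2 = (0, - x2, - x3, c2)"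
proof -
  obtain c1 c12 c21 c2 where C: "\<phi> gm_one = (c1, c12, c21, c2)" by (cases "\<phi> gm_one")
  obtain x1 x2 x3 x4 where X: "\<phi> gm_P1 = (x1, x2, x3, x4)" by (cases "\<phi> gm_P1")
  have "\<phi> gm_P2 = \<phi> (gm_one - gm_P1)"
    by (simp add: gm_P2_def gm_one_def gm_P1_def)
  also have "\<dots> = \<phi> gm_one - \<phi> gm_P1"
    by (rule additive.diff[OF assms(3)])
  finally have P2: "\<phi> gm_P2 = (c1 - x1, c12 - x2, c21 - x3, c2 - x4)"
    using C X by simp
  have "gm_P1 \<odot> gm_P2 = 0" and "gm_P2 \<odot> gm_P1 = 0"
    by (simp_all add: gm_P1_def gm_P2_def zero_prod_def)
  then have "gm_jordan S (\<phi> gm_P1) gm_P2 + gm_jordan S gm_P1 (\<phi> gm_P2) = 0"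
    by (rule jordan_derivable_at_zeroD[OF assms(4)])
  then have "(c1 - x1) + (c1 - x1) = 0" "c12 = 0" "c21 = 0" "x4 + x4 = 0"
    unfolding X P2 by (simp_all add: gm_jordan_def gm_P1_def gm_P2_def zero_prod_def)
  then have "x1 = c1" "c12 = 0" "c21 = 0" "x4 = 0"
    using two_torsion_free_double_eq_0[OF assms(1)] two_torsion_free_double_eq_0[OF assms(2)]
    by simp_all
  with C X P2 show thesis
    by (intro that) simp_all
qed

lemma additive_gm_varphi: "additive \<phi> \<Longrightarrow> additive (gm_varphi S \<phi>)"
  by (rule additive.intro)
    (simp add: gm_varphi_def gm_comm_def additive.add gm_mult_add algebra_simps)

end

text \<open>In the application \<open>(c1, 0, 0, c2)\<close> is \<open>\<phi>(I)\<close>; its centrality is derived (\<open>diag_central\<close>),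
  not assumed.\<close>

locale jordan_derivable_shift = generalized_matrix_ring S + d: additive d
  for S :: "('a::ring_1, 'm::ab_group_add, 'n::ab_group_add, 'b::ring_1) gmr"
    and d :: "('a, 'm, 'n, 'b) gmat \<Rightarrow> ('a, 'm, 'n, 'b) gmat" +
  fixes c1 :: 'a and c2 :: 'b
  assumes two_torsion_free_A: "two_torsion_free TYPE('a)"
    and two_torsion_free_B: "two_torsion_free TYPE('b)"
    and d_P1[simp]: "d (1, 0, 0, 0) = 0"
    and d_P2[simp]: "d (0, 0, 0, 1) = 0"
    and shift_derivable: "jordan_derivable_at_zero S (\<lambda>U. d U + (c1, 0, 0, c2) \<odot> U)"
begin

lemma double_eq_0_A[simp]: "(x::'a) + x = 0 \<longleftrightarrow> x = 0"
  using two_torsion_free_A by (rule two_torsion_free_double_eq_0)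

lemma double_eq_0_B[simp]: "(x::'b) + x = 0 \<longleftrightarrow> x = 0"
  using two_torsion_free_B by (rule two_torsion_free_double_eq_0)

lemma shift_condition:
  assumes "U \<odot> V = 0" and "V \<odot> U = 0"
  shows "gm_jordan S (d U + (c1, 0, 0, c2) \<odot> U) V + gm_jordan S U (d V + (c1, 0, 0, c2) \<odot> V) = 0"
  using shift_derivable assms by (rule jordan_derivable_at_zeroD)

lemma d_zero_tuple[simp]: "d (0, 0, 0, 0) = 0"
  using d.zero by (simp add: zero_prod_def)

lemma d_tuple: "d (a, m, n, b) = d (a, 0, 0, 0) + d (0, m, 0, 0) + d (0, 0, n, 0) + d (0, 0, 0, b)"
  by (simp flip: d.add)

text \<open>By \<open>d_A\<close>, \<open>d_B\<close>, \<open>d_M\<close>, \<open>d_N\<close> below,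
  \<open>d (a, m, n, b) = (dA a, dMM m + dNM n, dMN m + dNN n, dB b)\<close>.\<close>

definition "dA a = fst (d (a, 0, 0, 0))"
definition "dB b = snd (snd (snd (d (0, 0, 0, b))))"
definition "dMM m = fst (snd (d (0, m, 0, 0)))"
definition "dMN m = fst (snd (snd (d (0, m, 0, 0))))"
definition "dNM n = fst (snd (d (0, 0, n, 0)))"
definition "dNN n = fst (snd (snd (d (0, 0, n, 0))))"

lemma d_A: "d (a, 0, 0, 0) = (dA a, 0, 0, 0)"
proof -
  obtain y1 y2 y3 y4 where y: "d (a, 0, 0, 0) = (y1, y2, y3, y4)" by (cases "d (a, 0, 0, 0)")
  have "gm_jordan S (d (a, 0, 0, 0) + (c1, 0, 0, c2) \<odot> (a, 0, 0, 0)) (0, 0, 0, 1)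
      + gm_jordan S (a, 0, 0, 0) (d (0, 0, 0, 1) + (c1, 0, 0, c2) \<odot> (0, 0, 0, 1)) = 0"
    by (rule shift_condition) (simp_all add: zero_prod_def)
  with y show ?thesis by (simp add: gm_jordan_def zero_prod_def dA_def)
qed

lemma d_B: "d (0, 0, 0, b) = (0, 0, 0, dB b)"
proof -
  obtain y1 y2 y3 y4 where y: "d (0, 0, 0, b) = (y1, y2, y3, y4)" by (cases "d (0, 0, 0, b)")
  have "gm_jordan S (d (1, 0, 0, 0) + (c1, 0, 0, c2) \<odot> (1, 0, 0, 0)) (0, 0, 0, b)
      + gm_jordan S (1, 0, 0, 0) (d (0, 0, 0, b) + (c1, 0, 0, c2) \<odot> (0, 0, 0, b)) = 0"
    by (rule shift_condition) (simp_all add: zero_prod_def)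
  with y show ?thesis by (simp add: gm_jordan_def zero_prod_def dB_def)
qed

lemma d_M:
  shows "d (0, m, 0, 0) = (0, dMM m, dMN m, 0)"
    and pMN_dMN: "pMN S m (dMN m) = 0"
    and pNM_dMN: "pNM S (dMN m) m = 0"
    and diag_balanced_M: "lA S c1 m = rB S m c2"
proof -
  obtain y1 y2 y3 y4 where y: "d (0, m, 0, 0) = (y1, y2, y3, y4)" by (cases "d (0, m, 0, 0)")
  have "d (0, - m, 0, 0) = (- y1, - y2, - y3, - y4)"
    using d.minus[of "(0, m, 0, 0)"] y by simp
  then have "d (1, m, 0, 0) = (y1, y2, y3, y4)" "d (0, - m, 0, 1) = (- y1, - y2, - y3, - y4)"
    "d (0, m, 0, 1) = (y1, y2, y3, y4)" "d (1, - m, 0, 0) = (- y1, - y2, - y3, - y4)"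
    using d_tuple[of 1 m 0 0] d_tuple[of 0 "- m" 0 1] d_tuple[of 0 m 0 1] d_tuple[of 1 "- m" 0 0] y
    by simp_all
  moreover have "gm_jordan S (d (1, m, 0, 0) + (c1, 0, 0, c2) \<odot> (1, m, 0, 0)) (0, - m, 0, 1)
      + gm_jordan S (1, m, 0, 0) (d (0, - m, 0, 1) + (c1, 0, 0, c2) \<odot> (0, - m, 0, 1)) = 0"
    "gm_jordan S (d (0, m, 0, 1) + (c1, 0, 0, c2) \<odot> (0, m, 0, 1)) (1, - m, 0, 0)
      + gm_jordan S (0, m, 0, 1) (d (1, - m, 0, 0) + (c1, 0, 0, c2) \<odot> (1, - m, 0, 0)) = 0"
    by (rule shift_condition; simp add: zero_prod_def)+
  ultimately have A: "y1 + y1 = pMN S m y3 + pMN S m y3" "- y1 = y1 + (pMN S m y3 + pMN S m y3)"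
    and B: "y4 + y4 = pNM S y3 m + pNM S y3 m" "- y4 = y4 + (pNM S y3 m + pNM S y3 m)"
    and M: "rB S m c2 = lA S c1 m + (lA S y1 m + (lA S y1 m + (rB S m y4 + rB S m y4)))"
    by (simp_all add: gm_jordan_def zero_prod_def algebra_simps)
  have "y1 = 0" "pMN S m y3 = 0" "y4 = 0" "pNM S y3 m = 0"
    using two_torsion_free_cancel[OF two_torsion_free_A A] two_torsion_free_cancel[OF two_torsion_free_B B]
    by simp_all
  with y M show "d (0, m, 0, 0) = (0, dMM m, dMN m, 0)" "pMN S m (dMN m) = 0" "pNM S (dMN m) m = 0"
    "lA S c1 m = rB S m c2"
    by (simp_all add: dMM_def dMN_def)
qed

lemma d_N:
  shows "d (0, 0, n, 0) = (0, dNM n, dNN n, 0)"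
    and pNM_dNM: "pNM S n (dNM n) = 0"
    and pMN_dNM: "pMN S (dNM n) n = 0"
    and diag_balanced_N: "lB S c2 n = rA S n c1"
proof -
  obtain y1 y2 y3 y4 where y: "d (0, 0, n, 0) = (y1, y2, y3, y4)" by (cases "d (0, 0, n, 0)")
  have "d (0, 0, - n, 0) = (- y1, - y2, - y3, - y4)"
    using d.minus[of "(0, 0, n, 0)"] y by simp
  then have "d (1, 0, n, 0) = (y1, y2, y3, y4)" "d (0, 0, - n, 1) = (- y1, - y2, - y3, - y4)"
    "d (0, 0, n, 1) = (y1, y2, y3, y4)" "d (1, 0, - n, 0) = (- y1, - y2, - y3, - y4)"
    using d_tuple[of 1 0 n 0] d_tuple[of 0 0 "- n" 1] d_tuple[of 0 0 n 1] d_tuple[of 1 0 "- n" 0] y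
    by simp_all
  moreover have "gm_jordan S (d (1, 0, n, 0) + (c1, 0, 0, c2) \<odot> (1, 0, n, 0)) (0, 0, - n, 1)
      + gm_jordan S (1, 0, n, 0) (d (0, 0, - n, 1) + (c1, 0, 0, c2) \<odot> (0, 0, - n, 1)) = 0"
    "gm_jordan S (d (0, 0, n, 1) + (c1, 0, 0, c2) \<odot> (0, 0, n, 1)) (1, 0, - n, 0)
      + gm_jordan S (0, 0, n, 1) (d (1, 0, - n, 0) + (c1, 0, 0, c2) \<odot> (1, 0, - n, 0)) = 0"
    by (rule shift_condition; simp add: zero_prod_def)+
  ultimately have A: "y1 + y1 = pMN S y2 n + pMN S y2 n" "- y1 = y1 + (pMN S y2 n + pMN S y2 n)"
    and B: "y4 + y4 = pNM S n y2 + pNM S n y2" "- y4 = y4 + (pNM S n y2 + pNM S n y2)"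
    and N: "lB S c2 n = lB S y4 n + (lB S y4 n + (rA S n c1 + (rA S n y1 + rA S n y1)))"
    by (simp_all add: gm_jordan_def zero_prod_def algebra_simps)
  have "y1 = 0" "pMN S y2 n = 0" "y4 = 0" "pNM S n y2 = 0"
    using two_torsion_free_cancel[OF two_torsion_free_A A] two_torsion_free_cancel[OF two_torsion_free_B B]
    by simp_all
  with y N show "d (0, 0, n, 0) = (0, dNM n, dNN n, 0)" "pNM S n (dNM n) = 0" "pMN S (dNM n) n = 0"
    "lB S c2 n = rA S n c1"
    by (simp_all add: dNM_def dNN_def)
qed

lemma d_add_tuple: "d (a + a', m + m', n + n', b + b') = d (a, m, n, b) + d (a', m', n', b')"
  using d.add[of "(a, m, n, b)" "(a', m', n', b')"] by simp

lemma additive_components: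
  "additive dA" "additive dB" "additive dMM" "additive dMN" "additive dNM" "additive dNN"
  using d_add_tuple[of _ _ 0 0 0 0 0 0] d_add_tuple[of 0 0 0 0 0 0]
    d_add_tuple[of 0 0 _ _ 0 0 0 0] d_add_tuple[of 0 0 0 0 _ _ 0 0]
  by (simp_all add: additive_def dA_def dB_def dMM_def dMN_def dNM_def dNN_def)

lemmas component_simps[simp] =
  additive_components[THEN additive.add] additive_components[THEN additive.zero]
  additive_components[THEN additive.minus] additive_components[THEN additive.diff]

lemma diag_central: "(c1, 0, 0, c2) \<odot> U = U \<odot> (c1, 0, 0, c2)"
proof -
  have "c1 * a - a * c1 = 0" for a
    by (rule faithful_A) (simp add: diag_balanced_M)
  moreover have "c2 * b - b * c2 = 0" for b
    by (rule faithful_B) (simp flip: diag_balanced_M)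
  ultimately show ?thesis
    by (cases U) (simp add: diag_balanced_M diag_balanced_N)
qed

lemma d_derivable_at_zero: "jordan_derivable_at_zero S d"
  using jordan_derivable_at_zero_diff[OF shift_derivable jordan_derivable_at_zero_central[OF diag_central]]
  by simp

lemma derivable_condition:
  "U \<odot> V = 0 \<Longrightarrow> V \<odot> U = 0 \<Longrightarrow> gm_jordan S (d U) V + gm_jordan S U (d V) = 0"
  using d_derivable_at_zero by (rule jordan_derivable_at_zeroD)

lemma dMM_lA: "dMM (lA S a m) = lA S (dA a) m + lA S a (dMM m)"
  and dMN_lA: "dMN (lA S a m) = rA S (dMN m) a"
proof -
  have "d (a, lA S a m, 0, 0) = (dA a, dMM (lA S a m), dMN (lA S a m), 0)"
    using d_tuple[of a "lA S a m" 0 0] by (simp add: d_A d_M)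
  moreover have "d (0, - m, 0, 1) = (0, - dMM m, - dMN m, 0)"
    using d_tuple[of 0 "- m" 0 1] d.minus[of "(0, m, 0, 0)"] by (simp add: d_M)
  moreover have "gm_jordan S (d (a, lA S a m, 0, 0)) (0, - m, 0, 1)
      + gm_jordan S (a, lA S a m, 0, 0) (d (0, - m, 0, 1)) = 0"
    by (rule derivable_condition) (simp_all add: zero_prod_def)
  ultimately show "dMM (lA S a m) = lA S (dA a) m + lA S a (dMM m)"
    and "dMN (lA S a m) = rA S (dMN m) a"
    by (simp_all add: gm_jordan_def zero_prod_def algebra_simps)
qed

lemma dMM_rB: "dMM (rB S m b) = rB S (dMM m) b + rB S m (dB b)"
  and dMN_rB: "dMN (rB S m b) = lB S b (dMN m)"
proof -
  have "d (1, m, 0, 0) = (0, dMM m, dMN m, 0)"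
    using d_tuple[of 1 m 0 0] by (simp add: d_M)
  moreover have "d (0, - rB S m b, 0, b) = (0, - dMM (rB S m b), - dMN (rB S m b), dB b)"
    using d_tuple[of 0 "- rB S m b" 0 b] by (simp add: d_M d_B)
  moreover have "gm_jordan S (d (1, m, 0, 0)) (0, - rB S m b, 0, b)
      + gm_jordan S (1, m, 0, 0) (d (0, - rB S m b, 0, b)) = 0"
    by (rule derivable_condition) (simp_all add: zero_prod_def)
  ultimately show "dMM (rB S m b) = rB S (dMM m) b + rB S m (dB b)"
    and "dMN (rB S m b) = lB S b (dMN m)"
    by (simp_all add: gm_jordan_def zero_prod_def algebra_simps)
qed

lemma dNM_rA: "dNM (rA S n a) = lA S a (dNM n)"
  and dNN_rA: "dNN (rA S n a) = rA S n (dA a) + rA S (dNN n) a"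
proof -
  have "d (a, 0, rA S n a, 0) = (dA a, dNM (rA S n a), dNN (rA S n a), 0)"
    using d_tuple[of a 0 "rA S n a" 0] by (simp add: d_A d_N)
  moreover have "d (0, 0, - n, 1) = (0, - dNM n, - dNN n, 0)"
    using d_tuple[of 0 0 "- n" 1] by (simp add: d_N)
  moreover have "gm_jordan S (d (a, 0, rA S n a, 0)) (0, 0, - n, 1)
      + gm_jordan S (a, 0, rA S n a, 0) (d (0, 0, - n, 1)) = 0"
    by (rule derivable_condition) (simp_all add: zero_prod_def)
  ultimately show "dNM (rA S n a) = lA S a (dNM n)"
    and "dNN (rA S n a) = rA S n (dA a) + rA S (dNN n) a"
    by (simp_all add: gm_jordan_def zero_prod_def algebra_simps)
qed

lemma dNM_lB: "dNM (lB S b n) = rB S (dNM n) b"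
  and dNN_lB: "dNN (lB S b n) = lB S (dB b) n + lB S b (dNN n)"
proof -
  have "d (1, 0, n, 0) = (0, dNM n, dNN n, 0)"
    using d_tuple[of 1 0 n 0] by (simp add: d_N)
  moreover have "d (0, 0, - lB S b n, b) = (0, - dNM (lB S b n), - dNN (lB S b n), dB b)"
    using d_tuple[of 0 0 "- lB S b n" b] by (simp add: d_N d_B)
  moreover have "gm_jordan S (d (1, 0, n, 0)) (0, 0, - lB S b n, b)
      + gm_jordan S (1, 0, n, 0) (d (0, 0, - lB S b n, b)) = 0"
    by (rule derivable_condition) (simp_all add: zero_prod_def)
  ultimately show "dNM (lB S b n) = rB S (dNM n) b"
    and "dNN (lB S b n) = lB S (dB b) n + lB S b (dNN n)"
    by (simp_all add: gm_jordan_def zero_prod_def algebra_simps)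
qed

lemma dA_mult: "dA (a * a') = dA a * a' + a * dA a'"
proof -
  have "dA (a * a') - (dA a * a' + a * dA a') = 0"
  proof (rule faithful_A)
    fix m
    have "dMM (lA S (a * a') m) = lA S (dA (a * a')) m + lA S (a * a') (dMM m)"
      by (rule dMM_lA)
    moreover have "dMM (lA S (a * a') m) = lA S (dA a) (lA S a' m) + lA S a (lA S (dA a') m + lA S a' (dMM m))"
      by (simp add: dMM_lA)
    ultimately show "lA S (dA (a * a') - (dA a * a' + a * dA a')) m = 0"
      by (simp add: algebra_simps)
  qed
  then show ?thesis by simp
qed

lemma dB_mult: "dB (b * b') = dB b * b' + b * dB b'"
proof -
  have "dB (b * b') - (dB b * b' + b * dB b') = 0"
  proof (rule faithful_B)
    fix m
    have "dMM (rB S m (b * b')) = rB S (dMM m) (b * b') + rB S m (dB (b * b'))"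
      by (rule dMM_rB)
    moreover have "dMM (rB S m (b * b')) = rB S (rB S (dMM m) b + rB S m (dB b)) b' + rB S (rB S m b) (dB b')"
      by (simp add: dMM_rB)
    ultimately show "rB S m (dB (b * b') - (dB b * b' + b * dB b')) = 0"
      by (simp add: algebra_simps)
  qed
  then show ?thesis by simp
qed

lemma dA_one[simp]: "dA 1 = 0"
  using d_A[of 1] by (simp add: zero_prod_def)

text \<open>\<open>E\<close> below and \<open>F = I - E\<close> annihilate each other; the \<open>A\<close>-entry of the resulting
  zero-product identity is twice the left-hand side.\<close>

lemma dA_pMN_defect:
  "(1 + pMN S m n) * (pMN S (dMM m) n + pMN S m (dNN n) - dA (pMN S m n)) = 0"
proof -
  define E :: "('a, 'm, 'n, 'b) gmat"
    where "E = (1 + pMN S m n, - m - rB S m (pNM S n m), n, - pNM S n m)"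
  define F :: "('a, 'm, 'n, 'b) gmat"
    where "F = (- pMN S m n, m + rB S m (pNM S n m), - n, 1 + pNM S n m)"
  have "E \<odot> F = 0" "F \<odot> E = 0"
    by (simp_all add: E_def F_def zero_prod_def algebra_simps)
  then have cond: "gm_jordan S (d E) F + gm_jordan S E (d F) = 0"
    by (rule derivable_condition)
  have "F = (1, 0, 0, 1) - E"
    by (simp add: E_def F_def)
  then have dF: "d F = - d E"
    using d.diff[of "(1, 0, 0, 1)" E] d_tuple[of 1 0 0 1] by simp
  have dE: "d E = (dA (pMN S m n),
      - dMM m - (lA S (dA (pMN S m n)) m + rB S m (pNM S n (dMM m))) + dNM n,
      - dMN m - rA S (dMN m) (pMN S m n) + dNN n, - dB (pNM S n m))"
    using d_tuple[of "1 + pMN S m n" "- m - rB S m (pNM S n m)" n "- pNM S n m"]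
      dMM_lA[of "pMN S m n" m] dMN_lA[of "pMN S m n" m]
    by (simp add: E_def d_A d_B d_M d_N)
  have "fst (gm_jordan S (d E) F + gm_jordan S E (d F)) =
      (1 + pMN S m n) * (pMN S (dMM m) n + pMN S m (dNN n) - dA (pMN S m n))
      + (1 + pMN S m n) * (pMN S (dMM m) n + pMN S m (dNN n) - dA (pMN S m n))"
    unfolding dF dE by (simp add: gm_jordan_def E_def F_def algebra_simps pMN_dMN pMN_dNM)
  with cond show ?thesis by simp
qed

lemma dA_pMN: "dA (pMN S m n) = pMN S (dMM m) n + pMN S m (dNN n)"
proof -
  \<comment> \<open>Replacing \<open>m\<close> by \<open>- m\<close> turns the factor \<open>1 + mn\<close> into \<open>1 - mn\<close>.\<close>
  define D where "D = pMN S (dMM m) n + pMN S m (dNN n) - dA (pMN S m n)"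
  have "(1 + pMN S m n) * D = 0"
    using dA_pMN_defect[of m n] by (simp add: D_def)
  moreover have "(1 - pMN S m n) * - D = 0"
    using dA_pMN_defect[of "- m" n] by (simp add: D_def algebra_simps)
  ultimately have "D + D = 0"
    by (simp add: algebra_simps)
  then show ?thesis by (simp add: D_def)
qed

lemma dB_pNM: "dB (pNM S n m) = pNM S n (dMM m) + pNM S (dNN n) m"
proof -
  have "dB (pNM S n m) - (pNM S n (dMM m) + pNM S (dNN n) m) = 0"
  proof (rule faithful_B)
    fix m'
    have "dMM (rB S m' (pNM S n m)) = rB S (dMM m') (pNM S n m) + rB S m' (dB (pNM S n m))"
      by (rule dMM_rB)
    moreover have "dMM (rB S m' (pNM S n m)) = lA S (dA (pMN S m' n)) m + rB S m' (pNM S n (dMM m))"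
      using dMM_lA[of "pMN S m' n" m] by simp
    ultimately show "rB S m' (dB (pNM S n m) - (pNM S n (dMM m) + pNM S (dNN n) m)) = 0"
      by (simp add: dA_pMN algebra_simps)
  qed
  then show ?thesis by simp
qed

lemma jordan_identity: "d (U \<odot> U) = d U \<odot> U + U \<odot> d U"
proof -
  obtain a m n b where U: "U = (a, m, n, b)" by (cases U)
  have "d U = (dA a, dMM m + dNM n, dMN m + dNN n, dB b)"
    unfolding U using d_tuple[of a m n b] by (simp add: d_A d_B d_M d_N)
  moreover have "d (U \<odot> U) = (dA (a * a + pMN S m n),
      dMM (lA S a m + rB S m b) + dNM (lB S b n + rA S n a),
      dMN (lA S a m + rB S m b) + dNN (lB S b n + rA S n a), dB (pNM S n m + b * b))"
    unfolding U using d_tuple[of "a * a + pMN S m n" "lA S a m + rB S m b" "lB S b n + rA S n a"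
      "pNM S n m + b * b"]
    by (simp add: d_A d_B d_M d_N)
  ultimately show ?thesis
    unfolding U
    by (simp add: dMM_lA dMN_lA dMM_rB dMN_rB dNM_rA dNN_rA dNM_lB dNN_lB dA_mult dB_mult
        dA_pMN dB_pNM pMN_dMN pNM_dMN pMN_dNM pNM_dNM algebra_simps)
qed

end

lemma (in generalized_matrix_ring) varphi_jordan_derivable_shift:
  assumes "two_torsion_free TYPE('a)" and "two_torsion_free TYPE('b)"
    and "additive \<phi>" and "jordan_derivable_at_zero S \<phi>"
  obtains c1 c2 where "jordan_derivable_shift S (gm_varphi S \<phi>) c1 c2"
proof -
  obtain c1 c2 x2 x3 where one: "\<phi> gm_one = (c1, 0, 0, c2)"
    and P1: "\<phi> gm_P1 = (c1, x2, x3, 0)" and P2: "\<phi> gm_P2 = (0, - x2, - x3, c2)"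
    using values_at_idempotents[OF assms] by blast
  have T: "gm_T S \<phi> = (0, x2, - x3, 0)"
    unfolding gm_T_def P1 P2 by (simp add: gm_P1_def gm_P2_def)
  have "(\<lambda>U. gm_varphi S \<phi> U + (c1, 0, 0, c2) \<odot> U) = (\<lambda>U. \<phi> U + gm_comm S (gm_T S \<phi>) U)"
    by (simp add: gm_varphi_def one)
  then have "jordan_derivable_at_zero S (\<lambda>U. gm_varphi S \<phi> U + (c1, 0, 0, c2) \<odot> U)"
    using jordan_derivable_at_zero_add[OF assms(4) jordan_derivable_at_zero_commutator] by simp
  moreover have "gm_varphi S \<phi> (1, 0, 0, 0) = 0" and "gm_varphi S \<phi> (0, 0, 0, 1) = 0"
    using P1 P2 unfolding gm_varphi_def gm_comm_def gm_P1_def gm_P2_def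
    by (simp_all add: one T zero_prod_def)
  ultimately have "jordan_derivable_shift S (gm_varphi S \<phi>) c1 c2"
    using generalized_matrix_ring_axioms additive_gm_varphi[OF assms(3)] assms(1,2)
    by (simp add: jordan_derivable_shift_def jordan_derivable_shift_axioms_def)
  then show thesis by (rule that)
qed

theorem lemma2p7:
  fixes S :: "('a::ring_1, 'm::ab_group_add, 'n::ab_group_add, 'b::ring_1) gmr"
    and \<phi> :: "('a, 'm, 'n, 'b) gmat \<Rightarrow> ('a, 'm, 'n, 'b) gmat"
  assumes "gen_matrix_ring S"
    and "two_torsion_free TYPE('a)" and "two_torsion_free TYPE('b)"
    and "\<And>U V. \<phi> (U + V) = \<phi> U + \<phi> V"
    and "\<And>U V. gm_mult S U V = 0 \<Longrightarrow> gm_mult S V U = 0 \<Longrightarrow>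
           gm_jordan S (\<phi> U) V + gm_jordan S U (\<phi> V) = 0"
  shows "(\<forall>U V. gm_varphi S \<phi> (U + V) = gm_varphi S \<phi> U + gm_varphi S \<phi> V) \<and>
         (\<forall>U. gm_varphi S \<phi> (gm_mult S U U) =
               gm_mult S (gm_varphi S \<phi> U) U + gm_mult S U (gm_varphi S \<phi> U))"
proof -
  interpret generalized_matrix_ring S
    using assms(1) unfolding gen_matrix_ring_iff .
  have "additive \<phi>"
    using assms(4) by (rule additive.intro)
  moreover have "jordan_derivable_at_zero S \<phi>"
    using assms(5) unfolding jordan_derivable_at_zero_def by blast
  ultimately obtain c1 c2 where "jordan_derivable_shift S (gm_varphi S \<phi>) c1 c2"
    using varphi_jordan_derivable_shift[OF assms(2,3)] by blast
  then interpret varphi: jordan_derivable_shift S "gm_varphi S \<phi>" c1 c2 .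
  show ?thesis
    using varphi.d.add varphi.jordan_identity by blast
qed

end
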